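(* For $n\in\mathbb Z_{>0}$, the differential algebra map $\mathrm{Pr}^{PV}_n:\mathcal W(\mathfrak{gl}_{T=n})\to\mathcal W^{Adl}(\mathfrak{gl}_n)$ defined by $\mathrm{Pr}^{PV}_n(u_{-n+i,T=n})=u_{-n+i}$ for $0\le i\le n-1$ and $\mathrm{Pr}^{PV}_n(u_{-n+i,T=n})=0$ for $i\ge n$ is a surjective morphism of Poisson vertex algebras. Moreover, let $\mathrm{Inv}^{PV}_n:\mathcal W^{Adl}(\mathfrak{gl}_n)\to\mathcal W(\mathfrak{gl}_{T=n})$ be the differential algebra section $u_{-n+i}\mapsto u_{-n+i,T=n}$; then for fixed $i_0,j_0\in\mathbb Z_{\ge0}$ and all sufficiently large $n$, $$\mathrm{Inv}^{PV}_n(\{u_{-n+i_0\,\lambda}u_{-n+j_0}\})=\{u_{-n+i_0,T=n\,\lambda}u_{-n+j_0,T=n}\}.$$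
   Context: Pseudodifferential symbols over a differential algebra: $\sum_{m\le N}a_m\partial^{\beta+m}$ multiplied via $\partial^{\beta_1+k}\circ(a\partial^{\beta_2+m})=\sum_{j\ge0}\binom{\beta_1+k}{j}\partial^j(a)\partial^{\beta_1+\beta_2+k+m-j}$. For monic $L=\partial^\beta+\sum_{i\in I_\beta}w_i\partial^{-1-i}$, $I_\beta=\{-\beta+k:k\ge0\}$, set $H^{(L)}_{ij}(\partial)f=\mathrm{Res}_\partial\big(((L\partial^if)_+L-L(\partial^ifL)_+)\circ\partial^j\big)$ ($(\cdot)_+$ nonnegative-power part, $\mathrm{Res}_\partial$ coefficient of $\partial^{-1}$); $L$ is of Adler type if $\{w_{i\,\lambda}w_j\}=H^{(L)}_{ji}(\lambda)$. $\mathcal W(\mathfrak{gl}_{T=n})$ is the differential polynomial algebra over $\mathbb C$ in $u_{-n+i,T=n}$, $i\ge0$, with the PVA structure making $L_{T=n}=\partial^n+\sum_{i\ge0}u_{-n+i,T=n}\partial^{n-1-i}$ (a pseudodifferential symbol) of Adler type. $\mathcal W^{Adl}(\mathfrak{gl}_n)$ is the differential polynomial algebra in $u_{-n},\dots,u_{-1}$ with the PVA structure making the differential operator $L_n=\partial^n+u_{-n}\partial^{n-1}+\dots+u_{-1}$ of Adler type (the classical $\mathcal W$-algebra of $\mathfrak{gl}_n$ with the second Adler–Gelfand–Dickey bracket). *)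

theory Defs
  imports Complex_Main "HOL-Library.Poly_Mapping" "HOL-Computational_Algebra.Polynomial"
begin

text \<open>Variables: U i m stands for the m-th derivative of the generator u_{-n+i}
  (resp. u_{-n+i,T=n}); F m stands for the m-th derivative of an auxiliary
  test function f, used only to read off the symbol of the differential
  operator H(\<partial>).\<close>

datatype var = U nat nat | F nat

type_synonym dpoly = "(var \<Rightarrow>\<^sub>0 nat) \<Rightarrow>\<^sub>0 complex"

fun dvar :: "var \<Rightarrow> var" where
  "dvar (U i m) = U i (Suc m)"
| "dvar (F m) = F (Suc m)"

definition Var :: "var \<Rightarrow> dpoly" where
  "Var v = Poly_Mapping.single (Poly_Mapping.single v 1) 1"

definition cst :: "complex \<Rightarrow> dpoly" where
  "cst c = Poly_Mapping.single 0 c"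

definition dd :: "dpoly \<Rightarrow> dpoly" where
  "dd p = (\<Sum>mon\<in>Poly_Mapping.keys p. \<Sum>v\<in>Poly_Mapping.keys mon.
      Poly_Mapping.single (mon - Poly_Mapping.single v 1 + Poly_Mapping.single (dvar v) 1)
        (Poly_Mapping.lookup p mon * of_nat (Poly_Mapping.lookup mon v)))"

definition polys_in :: "var set \<Rightarrow> dpoly set" where
  "polys_in S = {p. \<forall>mon\<in>Poly_Mapping.keys p. Poly_Mapping.keys mon \<subseteq> S}"

text \<open>W(gl_{T=n}): differential polynomials in u_{-n+i,T=n}, i \<ge> 0.\<close>
definition WT :: "dpoly set" where
  "WT = polys_in {U i m | i m. True}"

text \<open>W^{Adl}(gl_n): differential polynomials in u_{-n},...,u_{-1}.\<close>
definition WA :: "nat \<Rightarrow> dpoly set" where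
  "WA n = polys_in {U i m | i m. i < n}"

text \<open>A symbol \<Sum>_{k \<le> N} a_k \<partial>^k is represented by its coefficient function.\<close>

definition is_symbol :: "(int \<Rightarrow> 'a::zero) \<Rightarrow> bool" where
  "is_symbol A \<longleftrightarrow> (\<exists>N. \<forall>k>N. A k = 0)"

definition sbound :: "(int \<Rightarrow> 'a::zero) \<Rightarrow> int" where
  "sbound A = (SOME N. \<forall>k>N. A k = 0)"

definition ibinom :: "int \<Rightarrow> nat \<Rightarrow> int" where
  "ibinom k j = (if k \<ge> 0 then int (nat k choose j)
                 else (-1) ^ j * int ((nat (- k) + j - 1) choose j))"

text \<open>Product of symbols: \<partial>^k \<circ> (b \<partial>^m) = \<Sum>_{j\<ge>0} binom(k,j) \<partial>^j(b) \<partial>^{k+m-j};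
  the coefficient of \<partial>^p is a finite sum (all other terms vanish).\<close>
definition smul :: "('a \<Rightarrow> 'a) \<Rightarrow> (int \<Rightarrow> 'a::comm_ring_1) \<Rightarrow> (int \<Rightarrow> 'a) \<Rightarrow> int \<Rightarrow> 'a" where
  "smul d A B p = (\<Sum>k\<in>{p - sbound B..sbound A}. \<Sum>j\<in>{0..nat (sbound A + sbound B - p)}.
       of_int (ibinom k j) * A k * (d ^^ j) (B (p + int j - k)))"

definition splus :: "(int \<Rightarrow> 'a::zero) \<Rightarrow> int \<Rightarrow> 'a" where
  "splus A = (\<lambda>k. if k \<ge> 0 then A k else 0)"

definition sres :: "(int \<Rightarrow> 'a) \<Rightarrow> 'a" where
  "sres A = A (-1)"

definition spow :: "int \<Rightarrow> int \<Rightarrow> 'a::{zero,one}" where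
  "spow i = (\<lambda>k. if k = i then 1 else 0)"

definition sconst :: "'a \<Rightarrow> int \<Rightarrow> 'a::zero" where
  "sconst a = (\<lambda>k. if k = 0 then a else 0)"

text \<open>Monic symbol \<partial>^n + \<Sum>_{k\<ge>0} w_{-n+k} \<partial>^{n-1-k}; here w k stands for w_{-n+k}.\<close>
definition monic_sym :: "nat \<Rightarrow> (nat \<Rightarrow> dpoly) \<Rightarrow> int \<Rightarrow> dpoly" where
  "monic_sym n w = (\<lambda>k. if k = int n then 1
                         else if k < int n then w (nat (int n - 1 - k)) else 0)"

text \<open>H^{(L)}_{ij}(\<partial>) f = Res(((L\<partial>^i f)_+ L - L(\<partial>^i f L)_+) \<circ> \<partial>^j).\<close>
definition Hop :: "(int \<Rightarrow> dpoly) \<Rightarrow> int \<Rightarrow> int \<Rightarrow> dpoly \<Rightarrow> dpoly" where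
  "Hop L i j f = sres (smul dd
      (smul dd (splus (smul dd (smul dd L (spow i)) (sconst f))) L
       - smul dd L (splus (smul dd (smul dd (spow i) (sconst f)) L)))
      (spow j))"

text \<open>Coefficient of f^{(m)} in an expression that is linear in f.\<close>
definition fcoeff :: "nat \<Rightarrow> dpoly \<Rightarrow> dpoly" where
  "fcoeff m X = Abs_poly_mapping (\<lambda>mon.
      if (\<forall>k. F k \<notin> Poly_Mapping.keys mon)
      then Poly_Mapping.lookup X (mon + Poly_Mapping.single (F m) 1) else 0)"

definition Fords :: "dpoly \<Rightarrow> nat set" where
  "Fords X = {m. \<exists>mon\<in>Poly_Mapping.keys X. F m \<in> Poly_Mapping.keys mon}"

text \<open>The symbol H(\<lambda>) = \<Sum>_m h_m \<lambda>^m of the differential operator H(\<partial>) = \<Sum>_m h_m \<partial>^m.\<close>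
definition Hsym :: "(int \<Rightarrow> dpoly) \<Rightarrow> int \<Rightarrow> int \<Rightarrow> dpoly poly" where
  "Hsym L i j = (let X = Hop L i j (Var (F 0)) in
      \<Sum>m\<in>Fords X. monom (fcoeff m X) m)"

text \<open>(\<lambda>+\<partial>) and (-\<lambda>-\<partial>) acting on A[\<lambda>], \<partial> acting on the coefficients.\<close>
definition lpd :: "dpoly poly \<Rightarrow> dpoly poly" where
  "lpd P = pCons 0 P + map_poly dd P"

definition nlpd :: "dpoly poly \<Rightarrow> dpoly poly" where
  "nlpd P = - lpd P"

text \<open>{a_{\<lambda>+\<partial>} c}_\<rightarrow> b where P = {a_\<lambda> c}.\<close>
definition app_right :: "dpoly poly \<Rightarrow> dpoly \<Rightarrow> dpoly poly" where
  "app_right P b = (\<Sum>k\<le>degree P. smult (coeff P k) ((lpd ^^ k) [:b:]))"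

text \<open>{a_{-\<lambda>-\<partial>} b} where P = {a_\<lambda> b} (\<partial> acting on the coefficients).\<close>
definition skew_sub :: "dpoly poly \<Rightarrow> dpoly poly" where
  "skew_sub P = (\<Sum>k\<le>degree P. (nlpd ^^ k) [:coeff P k:])"

text \<open>Elements of A[\<lambda>][\<mu>]: outer variable \<mu>, inner variable \<lambda>.\<close>
definition br2 :: "(dpoly \<Rightarrow> dpoly \<Rightarrow> dpoly poly) \<Rightarrow> dpoly \<Rightarrow> dpoly poly \<Rightarrow> dpoly poly poly" where
  "br2 br a P = (\<Sum>k\<le>degree P. monom (br a (coeff P k)) k)"

definition swap_vars :: "dpoly poly poly \<Rightarrow> dpoly poly poly" where
  "swap_vars Q = (\<Sum>i\<le>degree Q. \<Sum>j\<le>degree (coeff Q i).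
       monom (monom (coeff (coeff Q i) j) i) j)"

text \<open>{{a_\<lambda> b}_{\<lambda>+\<mu>} c} with P = {a_\<lambda> b}.\<close>
definition jac_rhs :: "(dpoly \<Rightarrow> dpoly \<Rightarrow> dpoly poly) \<Rightarrow> dpoly poly \<Rightarrow> dpoly \<Rightarrow> dpoly poly poly" where
  "jac_rhs br P c = (\<Sum>k\<le>degree P. \<Sum>l\<le>degree (br (coeff P k) c).
      [:[:coeff (br (coeff P k) c) l:]:] * [:[:0, 1:]:] ^ k * ([:[:0, 1:]:] + [:0, 1:]) ^ l)"

definition is_PVA :: "dpoly set \<Rightarrow> (dpoly \<Rightarrow> dpoly \<Rightarrow> dpoly poly) \<Rightarrow> bool" where
  "is_PVA S br \<longleftrightarrow>
     (\<forall>a\<in>S. \<forall>b\<in>S. \<forall>k. coeff (br a b) k \<in> S) \<and>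
     (\<forall>a\<in>S. \<forall>b\<in>S. \<forall>c\<in>S. br (a + b) c = br a c + br b c) \<and>
     (\<forall>a\<in>S. \<forall>b\<in>S. \<forall>c\<in>S. br a (b + c) = br a b + br a c) \<and>
     (\<forall>a\<in>S. \<forall>b\<in>S. \<forall>z. br (cst z * a) b = smult (cst z) (br a b)) \<and>
     (\<forall>a\<in>S. \<forall>b\<in>S. \<forall>z. br a (cst z * b) = smult (cst z) (br a b)) \<and>
     (\<forall>a\<in>S. \<forall>b\<in>S. br (dd a) b = - pCons 0 (br a b)) \<and>
     (\<forall>a\<in>S. \<forall>b\<in>S. br a (dd b) = lpd (br a b)) \<and>
     (\<forall>a\<in>S. \<forall>b\<in>S. \<forall>c\<in>S. br a (b * c) = smult c (br a b) + smult b (br a c)) \<and>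
     (\<forall>a\<in>S. \<forall>b\<in>S. \<forall>c\<in>S. br (a * b) c = app_right (br a c) b + app_right (br b c) a) \<and>
     (\<forall>a\<in>S. \<forall>b\<in>S. br b a = - skew_sub (br a b)) \<and>
     (\<forall>a\<in>S. \<forall>b\<in>S. \<forall>c\<in>S.
        br2 br a (br b c) - swap_vars (br2 br b (br a c)) = jac_rhs br (br a b) c)"

text \<open>L = \<partial>^n + \<Sum> w_{-n+k} \<partial>^{n-1-k} is of Adler type for br:
  {w_{i \<lambda>} w_j} = H^{(L)}_{ji}(\<lambda>) for all i, j \<in> I_n, where i = -n+a, j = -n+b.\<close>
definition adler_type :: "(dpoly \<Rightarrow> dpoly \<Rightarrow> dpoly poly) \<Rightarrow> nat \<Rightarrow> (nat \<Rightarrow> dpoly) \<Rightarrow> bool" where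
  "adler_type br n w \<longleftrightarrow>
     (\<forall>a b. br (w a) (w b) = Hsym (monic_sym n w) (int b - int n) (int a - int n))"

text \<open>Generators: for W(gl_{T=n}), w_{-n+k} = u_{-n+k,T=n}; for W^{Adl}(gl_n),
  w_{-n+k} = u_{-n+k} for k < n and 0 otherwise (L_n is a differential operator).\<close>
definition wT :: "nat \<Rightarrow> dpoly" where
  "wT k = Var (U k 0)"

definition wA :: "nat \<Rightarrow> nat \<Rightarrow> dpoly" where
  "wA n k = (if k < n then Var (U k 0) else 0)"

definition PrPV :: "nat \<Rightarrow> dpoly \<Rightarrow> dpoly" where
  "PrPV n p = Abs_poly_mapping (\<lambda>mon.
      if (\<forall>i m. U i m \<in> Poly_Mapping.keys mon \<longrightarrow> i < n) then Poly_Mapping.lookup p mon else 0)"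

text \<open>Inv^{PV}_n: the section u_{-n+i}^{(m)} \<mapsto> u_{-n+i,T=n}^{(m)} (an inclusion in this model).\<close>
definition InvPV :: "nat \<Rightarrow> dpoly \<Rightarrow> dpoly" where
  "InvPV n p = p"

end

theory Submission
  imports Defs
begin

(* Pr^PV_n keeps exactly the monomials in the variables u_{-n+i}^{(m)} with i < n. This set of
   variables is stable under \<partial>, so Pr^PV_n is a homomorphism of differential algebras, and it maps
   L_{T=n} coefficientwise to L_n. The bracket of two generators is the symbol of H^{(L)}, whose
   coefficients are differential polynomials in those of L; hence Pr^PV_n intertwines the brackets
   on generators, and sesquilinearity, the Leibniz rule and skew-symmetry extend this to all of
   W(gl_{T=n}).
   L_{T=n} and L_n differ only in negative powers of \<partial>. Following the orders through the
   products defining H^{(L)}_{ji} for i = -n+i_0, j = -n+j_0 shows that these negative parts do not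
   reach the residue once i_0 + j_0 < n, so the brackets of the generators agree for large n. *)

section \<open>Polynomials in a set of variables\<close>

lemma keys_add_nat:
  "Poly_Mapping.keys (a + b :: 'a \<Rightarrow>\<^sub>0 nat) = Poly_Mapping.keys a \<union> Poly_Mapping.keys b"
  by (auto simp: in_keys_iff lookup_add)

lemma sum_single_lookup:
  "(\<Sum>m\<in>Poly_Mapping.keys p. Poly_Mapping.single m (Poly_Mapping.lookup p m)) = p"
  by (rule poly_mapping_eqI) (simp add: lookup_sum lookup_single when_def in_keys_iff)

lemma single_sum_one:
  "Poly_Mapping.single (sum g A) (1 :: 'b :: comm_semiring_1)
     = (\<Prod>x\<in>A. Poly_Mapping.single (g x :: 'a :: comm_monoid_add) 1)"
proof (induction A rule: infinite_finite_induct)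
  case (insert x A)
  have "Poly_Mapping.single (g x + sum g A) (1 :: 'b)
        = Poly_Mapping.single (g x) 1 * Poly_Mapping.single (sum g A) 1"
    by (simp add: mult_single)
  with insert show ?case by simp
qed simp_all

lemma single_single_one_eq_Var_power:
  "Poly_Mapping.single (Poly_Mapping.single v k) 1 = Var v ^ k"
proof (induction k)
  case (Suc k)
  have "Poly_Mapping.single (Poly_Mapping.single v (Suc k)) (1::complex)
      = Var v * Poly_Mapping.single (Poly_Mapping.single v k) 1"
    by (simp add: Var_def mult_single flip: single_add)
  then show ?case by (simp add: Suc)
qed simp

lemma monomial_eq_prod_Var_power:
  "Poly_Mapping.single mon 1 = (\<Prod>v\<in>Poly_Mapping.keys mon. Var v ^ Poly_Mapping.lookup mon v)"
  by (subst (1) sum_single_lookup[of mon, symmetric])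
     (simp add: single_sum_one single_single_one_eq_Var_power)

lemma polys_in_Var: "v \<in> S \<Longrightarrow> Var v \<in> polys_in S"
  by (simp add: polys_in_def Var_def)

lemma polys_in_add: "a \<in> polys_in S \<Longrightarrow> b \<in> polys_in S \<Longrightarrow> a + b \<in> polys_in S"
  using keys_add[of a b] by (auto simp: polys_in_def)

lemma polys_in_mult: "a \<in> polys_in S \<Longrightarrow> b \<in> polys_in S \<Longrightarrow> a * b \<in> polys_in S"
  using keys_mult[of a b] by (fastforce simp: polys_in_def keys_add_nat)

lemma polys_in_cst: "cst z \<in> polys_in S"
  by (simp add: polys_in_def cst_def)

lemma polys_in_induct [consumes 1, case_names one Var cst add mult]:
  assumes p: "p \<in> polys_in S"
    and one: "P 1"
    and Var: "\<And>v. v \<in> S \<Longrightarrow> P (Var v)"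
    and cst: "\<And>z q. q \<in> polys_in S \<Longrightarrow> P q \<Longrightarrow> P (cst z * q)"
    and add: "\<And>a b. a \<in> polys_in S \<Longrightarrow> b \<in> polys_in S \<Longrightarrow> P a \<Longrightarrow> P b \<Longrightarrow> P (a + b)"
    and mult: "\<And>a b. a \<in> polys_in S \<Longrightarrow> b \<in> polys_in S \<Longrightarrow> P a \<Longrightarrow> P b \<Longrightarrow> P (a * b)"
  shows "P p"
proof -
  define Q where "Q x \<longleftrightarrow> x \<in> polys_in S \<and> P x" for x
  have Q_one: "Q 1"
    using one by (simp add: Q_def polys_in_def)
  have Q_mult: "Q (a * b)" if "Q a" "Q b" for a b
    using that mult polys_in_mult by (auto simp: Q_def)
  have Q_cst: "Q (cst z * a)" if "Q a" for z a
    using that cst polys_in_mult[OF polys_in_cst] by (auto simp: Q_def)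
  have Q_zero: "Q 0"
    using Q_cst[OF Q_one, of 0] by (simp add: cst_def)
  have Q_sum: "Q (sum f A)" if "\<And>x. x \<in> A \<Longrightarrow> Q (f x)" for f :: "'a \<Rightarrow> dpoly" and A
    using that add polys_in_add
    by (induction A rule: infinite_finite_induct) (auto simp: Q_def Q_zero[unfolded Q_def])
  have Q_prod: "Q (prod f A)" if "\<And>x. x \<in> A \<Longrightarrow> Q (f x)" for f :: "'a \<Rightarrow> dpoly" and A
    using that by (induction A rule: infinite_finite_induct) (auto intro: Q_one Q_mult)
  have Q_power: "Q (Var v ^ k)" if "v \<in> S" for v k
  proof (induction k)
    case (Suc k)
    have "Q (Var v)"
      using Var polys_in_Var that by (simp add: Q_def)
    with Suc show ?case by (simp add: Q_mult)
  qed (simp add: Q_one)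
  have Q_term: "Q (Poly_Mapping.single mon (Poly_Mapping.lookup p mon))"
    if "mon \<in> Poly_Mapping.keys p" for mon
  proof -
    have "Poly_Mapping.single mon (Poly_Mapping.lookup p mon)
          = cst (Poly_Mapping.lookup p mon) * (\<Prod>v\<in>Poly_Mapping.keys mon. Var v ^ Poly_Mapping.lookup mon v)"
      by (simp add: cst_def mult_single flip: monomial_eq_prod_Var_power)
    moreover have "Poly_Mapping.keys mon \<subseteq> S"
      using p that by (auto simp: polys_in_def)
    ultimately show ?thesis
      by (auto intro: Q_cst Q_prod Q_power)
  qed
  have "Q p"
    using Q_sum[of "Poly_Mapping.keys p" "\<lambda>mon. Poly_Mapping.single mon (Poly_Mapping.lookup p mon)"]
    by (simp add: Q_term sum_single_lookup)
  then show ?thesis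
    by (simp add: Q_def)
qed

lemma WT_Var: "Var (U i m) \<in> WT"
  by (auto simp: WT_def intro: polys_in_Var)

section \<open>Restriction of variables and the derivation\<close>

definition restrict_vars :: "var set \<Rightarrow> dpoly \<Rightarrow> dpoly" where
  "restrict_vars V p = Abs_poly_mapping (\<lambda>mon.
      if Poly_Mapping.keys mon \<subseteq> V then Poly_Mapping.lookup p mon else 0)"

lemma lookup_restrict_vars:
  "Poly_Mapping.lookup (restrict_vars V p) mon =
     (if Poly_Mapping.keys mon \<subseteq> V then Poly_Mapping.lookup p mon else 0)"
proof -
  have "finite {mon. (if Poly_Mapping.keys mon \<subseteq> V then Poly_Mapping.lookup p mon else 0) \<noteq> 0}"
    by (rule finite_subset[OF _ finite_lookup[of p]]) auto
  then show ?thesis unfolding restrict_vars_def by simp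
qed

lemma restrict_vars_single:
  "restrict_vars V (Poly_Mapping.single mon c) =
     (if Poly_Mapping.keys mon \<subseteq> V then Poly_Mapping.single mon c else 0)"
  by (rule poly_mapping_eqI) (simp add: lookup_restrict_vars lookup_single when_def)

lemma restrict_vars_zero [simp]: "restrict_vars V 0 = 0"
  by (rule poly_mapping_eqI) (simp add: lookup_restrict_vars)

lemma restrict_vars_add: "restrict_vars V (a + b) = restrict_vars V a + restrict_vars V b"
  by (rule poly_mapping_eqI) (simp add: lookup_restrict_vars lookup_add)

lemma restrict_vars_sum: "restrict_vars V (sum f A) = (\<Sum>x\<in>A. restrict_vars V (f x))"
  by (induction A rule: infinite_finite_induct) (simp_all add: restrict_vars_add)

lemma restrict_vars_mult: "restrict_vars V (a * b) = restrict_vars V a * restrict_vars V b"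
proof -
  let ?t = "\<lambda>p m. Poly_Mapping.single m (Poly_Mapping.lookup p m)"
  have "restrict_vars V (a * b) =
          (\<Sum>m\<in>Poly_Mapping.keys a. \<Sum>m'\<in>Poly_Mapping.keys b. restrict_vars V (?t a m * ?t b m'))"
    by (subst (1) sum_single_lookup[of a, symmetric], subst (1) sum_single_lookup[of b, symmetric])
       (simp add: sum_product restrict_vars_sum)
  also have "\<dots> = (\<Sum>m\<in>Poly_Mapping.keys a. \<Sum>m'\<in>Poly_Mapping.keys b.
                     restrict_vars V (?t a m) * restrict_vars V (?t b m'))"
    by (auto simp: mult_single restrict_vars_single keys_add_nat intro!: sum.cong)
  also have "\<dots> = restrict_vars V a * restrict_vars V b"
    by (subst (3) sum_single_lookup[of a, symmetric], subst (3) sum_single_lookup[of b, symmetric])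
       (simp add: sum_product restrict_vars_sum)
  finally show ?thesis .
qed

lemma restrict_vars_cst: "restrict_vars V (cst z) = cst z"
  by (simp add: cst_def restrict_vars_single)

lemma keys_restrict_vars:
  "Poly_Mapping.keys (restrict_vars V p) = {mon \<in> Poly_Mapping.keys p. Poly_Mapping.keys mon \<subseteq> V}"
  by (auto simp: in_keys_iff[where s = "restrict_vars V p"] in_keys_iff[where s = p]
        lookup_restrict_vars split: if_splits)

lemma restrict_vars_id: "p \<in> polys_in V \<Longrightarrow> restrict_vars V p = p"
  by (rule poly_mapping_eqI)
     (auto simp: polys_in_def lookup_restrict_vars in_keys_iff[where s = p])

lemma restrict_vars_image_polys_in: "restrict_vars V ` polys_in W = polys_in (W \<inter> V)"
proof
  show "restrict_vars V ` polys_in W \<subseteq> polys_in (W \<inter> V)"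
    by (auto simp: polys_in_def keys_restrict_vars)
  show "polys_in (W \<inter> V) \<subseteq> restrict_vars V ` polys_in W"
  proof
    fix p assume "p \<in> polys_in (W \<inter> V)"
    then have "p = restrict_vars V p" "p \<in> polys_in W"
      by (auto simp: polys_in_def intro!: restrict_vars_id[symmetric])
    then show "p \<in> restrict_vars V ` polys_in W" by blast
  qed
qed

definition diff_monomial :: "(var \<Rightarrow>\<^sub>0 nat) \<Rightarrow> var \<Rightarrow> (var \<Rightarrow>\<^sub>0 nat)" where
  "diff_monomial mon v = mon - Poly_Mapping.single v 1 + Poly_Mapping.single (dvar v) 1"

lemma dd_eq_sum_over:
  assumes "finite K" and "Poly_Mapping.keys p \<subseteq> K"
  shows "dd p = (\<Sum>mon\<in>K. \<Sum>v\<in>Poly_Mapping.keys mon.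
      Poly_Mapping.single (diff_monomial mon v)
        (Poly_Mapping.lookup p mon * of_nat (Poly_Mapping.lookup mon v)))"
  unfolding dd_def diff_monomial_def using assms
  by (intro sum.mono_neutral_left) (auto simp: in_keys_iff)

lemma dd_zero [simp]: "dd 0 = 0"
  by (simp add: dd_def)

lemma dd_add: "dd (p + q) = dd p + dd q"
proof -
  let ?K = "Poly_Mapping.keys p \<union> Poly_Mapping.keys q"
  have "Poly_Mapping.keys (p + q) \<subseteq> ?K" by (rule keys_add)
  then show ?thesis
    by (simp add: dd_eq_sum_over[of ?K] lookup_add distrib_right single_add sum.distrib)
qed

lemma dd_sum: "dd (sum f A) = (\<Sum>x\<in>A. dd (f x))"
  by (induction A rule: infinite_finite_induct) (simp_all add: dd_add)

lemma dd_single: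
  "dd (Poly_Mapping.single mon c) = (\<Sum>v\<in>Poly_Mapping.keys mon.
      Poly_Mapping.single (diff_monomial mon v) (c * of_nat (Poly_Mapping.lookup mon v)))"
  by (subst dd_eq_sum_over[of "{mon}"]) auto

lemma dd_Var: "dd (Var v) = Var (dvar v)"
  by (simp add: Var_def dd_single diff_monomial_def)

lemma keys_diff_monomial:
  assumes "v \<in> Poly_Mapping.keys mon"
  shows "Poly_Mapping.keys (diff_monomial mon v) \<subseteq> insert (dvar v) (Poly_Mapping.keys mon)"
    and "Poly_Mapping.keys mon \<subseteq> insert v (Poly_Mapping.keys (diff_monomial mon v))"
    and "dvar v \<in> Poly_Mapping.keys (diff_monomial mon v)"
  using assms
  by (auto simp: diff_monomial_def in_keys_iff lookup_add lookup_minus lookup_single when_def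
      split: if_splits)

lemma restrict_vars_dd:
  assumes stable: "\<And>v. dvar v \<in> V \<longleftrightarrow> v \<in> V"
  shows "restrict_vars V (dd p) = dd (restrict_vars V p)"
proof -
  have keys_iff: "Poly_Mapping.keys (diff_monomial mon v) \<subseteq> V \<longleftrightarrow> Poly_Mapping.keys mon \<subseteq> V"
    if "v \<in> Poly_Mapping.keys mon" for mon v
    using keys_diff_monomial[OF that] stable[of v] that by blast
  have single: "restrict_vars V (dd (Poly_Mapping.single mon c))
      = dd (restrict_vars V (Poly_Mapping.single mon c))" for mon c
    by (cases "Poly_Mapping.keys mon \<subseteq> V")
       (simp_all add: dd_single restrict_vars_sum restrict_vars_single keys_iff cong: sum.cong)
  let ?t = "\<lambda>m. Poly_Mapping.single m (Poly_Mapping.lookup p m)"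
  have "restrict_vars V (dd p) = restrict_vars V (dd (\<Sum>m\<in>Poly_Mapping.keys p. ?t m))"
    by (simp only: sum_single_lookup)
  also have "\<dots> = dd (restrict_vars V (\<Sum>m\<in>Poly_Mapping.keys p. ?t m))"
    by (simp only: dd_sum restrict_vars_sum single)
  finally show ?thesis by (simp only: sum_single_lookup)
qed

section \<open>Homomorphisms of differential algebras\<close>

locale dpoly_diff_hom =
  fixes \<phi> :: "dpoly \<Rightarrow> dpoly"
  assumes hom_add: "\<phi> (a + b) = \<phi> a + \<phi> b"
    and hom_mult: "\<phi> (a * b) = \<phi> a * \<phi> b"
    and hom_cst: "\<phi> (cst z) = cst z"
    and hom_dd: "\<phi> (dd a) = dd (\<phi> a)"
begin

lemma hom_zero [simp]: "\<phi> 0 = 0"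
  using hom_cst[of 0] by (simp add: cst_def)

lemma hom_one: "\<phi> 1 = 1"
  using hom_cst[of 1] by (simp add: cst_def)

lemma hom_uminus: "\<phi> (- a) = - \<phi> a"
  using minus_unique[of "\<phi> a" "\<phi> (- a)"] hom_add[of a "- a"] by simp

lemma hom_diff: "\<phi> (a - b) = \<phi> a - \<phi> b"
  using hom_add[of a "- b"] by (simp add: hom_uminus)

lemma hom_sum: "\<phi> (sum f A) = (\<Sum>x\<in>A. \<phi> (f x))"
  by (induction A rule: infinite_finite_induct) (simp_all add: hom_add)

lemma hom_of_int: "\<phi> (of_int k) = of_int k"
  using hom_cst[of "of_int k"] by (simp add: cst_def)

lemma hom_funpow_dd: "\<phi> ((dd ^^ j) a) = (dd ^^ j) (\<phi> a)"
  by (induction j) (simp_all add: hom_dd)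

lemma map_poly_hom_add: "map_poly \<phi> (P + Q) = map_poly \<phi> P + map_poly \<phi> Q"
  by (rule poly_eqI) (simp add: coeff_map_poly hom_add)

lemma map_poly_hom_uminus: "map_poly \<phi> (- P) = - map_poly \<phi> P"
  by (rule poly_eqI) (simp add: coeff_map_poly hom_uminus)

lemma map_poly_hom_smult: "map_poly \<phi> (smult c P) = smult (\<phi> c) (map_poly \<phi> P)"
  by (rule map_poly_smult) (simp_all add: hom_mult)

lemma map_poly_hom_sum: "map_poly \<phi> (sum g A) = (\<Sum>x\<in>A. map_poly \<phi> (g x))"
  by (rule poly_eqI) (simp add: coeff_map_poly coeff_sum hom_sum)

lemma map_poly_hom_lpd: "map_poly \<phi> (lpd P) = lpd (map_poly \<phi> P)"
  by (rule poly_eqI)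
     (simp add: lpd_def coeff_map_poly hom_add hom_dd coeff_pCons split: nat.splits)

lemma map_poly_hom_skew_sub: "map_poly \<phi> (skew_sub P) = skew_sub (map_poly \<phi> P)"
proof -
  have nlpd: "map_poly \<phi> ((nlpd ^^ k) Q) = (nlpd ^^ k) (map_poly \<phi> Q)" for k Q
    by (induction k) (simp_all add: nlpd_def map_poly_hom_uminus map_poly_hom_lpd)
  have "(nlpd ^^ k) 0 = 0" for k
    by (induction k) (simp_all add: nlpd_def lpd_def)
  then have skew_sub_over: "skew_sub Q = (\<Sum>k\<le>degree P. (nlpd ^^ k) [:coeff Q k:])"
    if "degree Q \<le> degree P" for Q
    unfolding skew_sub_def using that
    by (intro sum.mono_neutral_left) (auto simp: coeff_eq_0)
  have "map_poly \<phi> (skew_sub P) = (\<Sum>k\<le>degree P. (nlpd ^^ k) [:\<phi> (coeff P k):])"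
    by (simp add: skew_sub_def map_poly_hom_sum nlpd map_poly_pCons)
  also have "\<dots> = skew_sub (map_poly \<phi> P)"
    by (simp add: skew_sub_over[OF map_poly_degree_leq] coeff_map_poly)
  finally show ?thesis .
qed

end

lemma dpoly_diff_hom_restrict_vars:
  "(\<And>v. dvar v \<in> V \<longleftrightarrow> v \<in> V) \<Longrightarrow> dpoly_diff_hom (restrict_vars V)"
  by unfold_locales
     (simp_all add: restrict_vars_add restrict_vars_mult restrict_vars_cst restrict_vars_dd)

section \<open>Products of symbols and the operator \<open>H\<close>\<close>

definition vanishes_above :: "int \<Rightarrow> (int \<Rightarrow> 'a::zero) \<Rightarrow> bool" where
  "vanishes_above N A \<longleftrightarrow> (\<forall>k>N. A k = 0)"

text \<open>\<^const>\<open>smul\<close> with the bounds picked by \<^const>\<open>sbound\<close> replaced by explicit ones;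
  any bounds beyond which the factors vanish give the same product.\<close>
definition smul_within ::
    "int \<Rightarrow> int \<Rightarrow> ('a \<Rightarrow> 'a) \<Rightarrow> (int \<Rightarrow> 'a::comm_ring_1) \<Rightarrow> (int \<Rightarrow> 'a) \<Rightarrow> int \<Rightarrow> 'a" where
  "smul_within NA NB d A B p = (\<Sum>k\<in>{p - NB..NA}. \<Sum>j\<in>{0..nat (NA + NB - p)}.
       of_int (ibinom k j) * A k * (d ^^ j) (B (p + int j - k)))"

lemma is_symbol_iff_vanishes_above: "is_symbol A \<longleftrightarrow> (\<exists>N. vanishes_above N A)"
  by (simp add: is_symbol_def vanishes_above_def)

lemma vanishes_above_sbound: "vanishes_above N A \<Longrightarrow> vanishes_above (sbound A) A"
  unfolding vanishes_above_def sbound_def by (rule someI_ex) blast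

lemma vanishes_above_mono: "vanishes_above N A \<Longrightarrow> N \<le> M \<Longrightarrow> vanishes_above M A"
  by (simp add: vanishes_above_def)

lemma funpow_fixpoint: "f x = x \<Longrightarrow> (f ^^ n) x = x"
  by (induction n) auto

lemma smul_within_mono:
  fixes d :: "'a::comm_ring_1 \<Rightarrow> 'a"
  assumes A: "vanishes_above NA A" and B: "vanishes_above NB B"
    and le: "NA \<le> NA'" "NB \<le> NB'" and d: "d 0 = 0"
  shows "smul_within NA NB d A B p = smul_within NA' NB' d A B p"
proof -
  let ?g = "\<lambda>(k, j). of_int (ibinom k j) * A k * (d ^^ j) (B (p + int j - k))"
  let ?I = "{p - NB..NA} \<times> {0..nat (NA + NB - p)}"
  let ?I' = "{p - NB'..NA'} \<times> {0..nat (NA' + NB' - p)}"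
  have vanish: "?g x = 0" if "x \<in> ?I' - ?I" for x
  proof -
    obtain k j where x: "x = (k, j)" by force
    show ?thesis
    proof (cases "k > NA")
      case False
      then have "p + int j - k > NB" using that x by auto
      then show ?thesis using B funpow_fixpoint[of d 0] d x by (simp add: vanishes_above_def)
    qed (use A x in \<open>simp add: vanishes_above_def\<close>)
  qed
  have "sum ?g ?I = sum ?g ?I'"
    by (rule sum.mono_neutral_left) (use le vanish in auto)
  then show ?thesis
    by (simp add: smul_within_def sum.cartesian_product)
qed

lemma smul_eq_smul_within:
  fixes d :: "'a::comm_ring_1 \<Rightarrow> 'a"
  assumes A: "vanishes_above NA A" and B: "vanishes_above NB B" and d: "d 0 = 0"
  shows "smul d A B p = smul_within NA NB d A B p"
proof -
  have A': "vanishes_above (sbound A) A" and B': "vanishes_above (sbound B) B"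
    using A B by (auto intro: vanishes_above_sbound)
  have "smul d A B p = smul_within (sbound A) (sbound B) d A B p"
    by (simp add: smul_def smul_within_def)
  also have "\<dots> = smul_within (max NA (sbound A)) (max NB (sbound B)) d A B p"
    by (rule smul_within_mono[where d = d, OF A' B' _ _ d]) auto
  also have "\<dots> = smul_within NA NB d A B p"
    by (rule smul_within_mono[where d = d, OF A B _ _ d, symmetric]) auto
  finally show ?thesis .
qed

lemma vanishes_above_smul:
  fixes d :: "'a::comm_ring_1 \<Rightarrow> 'a"
  assumes "vanishes_above NA A" and "vanishes_above NB B" and "d 0 = 0"
  shows "vanishes_above (NA + NB) (smul d A B)"
  using smul_eq_smul_within[where d = d, OF assms]
  by (simp add: vanishes_above_def smul_within_def)

lemma vanishes_above_splus: "vanishes_above N A \<Longrightarrow> vanishes_above N (splus A)"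
  by (simp add: vanishes_above_def splus_def)

lemma vanishes_above_diff:
  "vanishes_above N (A :: int \<Rightarrow> 'a::group_add) \<Longrightarrow> vanishes_above N B \<Longrightarrow> vanishes_above N (A - B)"
  by (simp add: vanishes_above_def)

lemma vanishes_above_spow: "vanishes_above i (spow i)"
  by (simp add: vanishes_above_def spow_def)

lemma vanishes_above_sconst: "vanishes_above 0 (sconst f)"
  by (simp add: vanishes_above_def sconst_def)

lemma vanishes_above_monic_sym: "vanishes_above (int n) (monic_sym n w)"
  by (simp add: vanishes_above_def monic_sym_def)

lemma is_symbol_monic_sym [simp]: "is_symbol (monic_sym n w)"
  using vanishes_above_monic_sym unfolding is_symbol_iff_vanishes_above by blast

lemma is_symbol_smul [simp]:
  fixes d :: "'a::comm_ring_1 \<Rightarrow> 'a"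
  shows "is_symbol A \<Longrightarrow> is_symbol B \<Longrightarrow> d 0 = 0 \<Longrightarrow> is_symbol (smul d A B)"
  unfolding is_symbol_iff_vanishes_above by (blast intro: vanishes_above_smul)

lemma is_symbol_splus [simp]: "is_symbol A \<Longrightarrow> is_symbol (splus A)"
  unfolding is_symbol_iff_vanishes_above by (blast intro: vanishes_above_splus)

lemma is_symbol_diff [simp]:
  "is_symbol (A :: int \<Rightarrow> 'a::group_add) \<Longrightarrow> is_symbol B \<Longrightarrow> is_symbol (A - B)"
  unfolding is_symbol_iff_vanishes_above
  by (metis vanishes_above_diff vanishes_above_mono max.cobounded1 max.cobounded2)

lemma is_symbol_spow [simp]: "is_symbol (spow i)"
  using vanishes_above_spow unfolding is_symbol_iff_vanishes_above by blast

lemma is_symbol_sconst [simp]: "is_symbol (sconst f)"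
  using vanishes_above_sconst unfolding is_symbol_iff_vanishes_above by blast

context dpoly_diff_hom
begin

lemma hom_smul:
  assumes "is_symbol A" and "is_symbol B"
  shows "\<phi> \<circ> smul dd A B = smul dd (\<phi> \<circ> A) (\<phi> \<circ> B)"
proof
  fix p
  obtain NA NB where A: "vanishes_above NA A" and B: "vanishes_above NB B"
    using assms unfolding is_symbol_iff_vanishes_above by blast
  then have "vanishes_above NA (\<phi> \<circ> A)" and "vanishes_above NB (\<phi> \<circ> B)"
    by (simp_all add: vanishes_above_def)
  then show "(\<phi> \<circ> smul dd A B) p = smul dd (\<phi> \<circ> A) (\<phi> \<circ> B) p"
    using A B
    by (simp add: smul_eq_smul_within smul_within_def hom_sum hom_mult hom_of_int hom_funpow_dd)
qed

lemma hom_Hop: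
  assumes "is_symbol L"
  shows "\<phi> (Hop L i j f) = Hop (\<phi> \<circ> L) i j (\<phi> f)"
proof -
  have hom_splus: "\<phi> \<circ> splus X = splus (\<phi> \<circ> X)" for X
    by (auto simp: splus_def)
  have hom_symbol_diff: "\<phi> \<circ> (X - Y) = (\<phi> \<circ> X) - (\<phi> \<circ> Y)" for X Y :: "int \<Rightarrow> dpoly"
    by (auto simp: hom_diff)
  have "\<phi> \<circ> spow i = spow i" and "\<phi> \<circ> sconst f = sconst (\<phi> f)" for i f
    by (auto simp: spow_def sconst_def hom_one)
  with assms show ?thesis
    by (simp add: Hop_def sres_def hom_smul hom_splus hom_symbol_diff flip: comp_apply[of \<phi>])
qed

end

lemma lookup_fcoeff:
  "Poly_Mapping.lookup (fcoeff m X) mon =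
     (if \<forall>k. F k \<notin> Poly_Mapping.keys mon
      then Poly_Mapping.lookup X (mon + Poly_Mapping.single (F m) 1) else 0)"
proof -
  let ?f = "\<lambda>mon. if \<forall>k. F k \<notin> Poly_Mapping.keys mon
      then Poly_Mapping.lookup X (mon + Poly_Mapping.single (F m) 1) else 0"
  have "{mon. ?f mon \<noteq> 0} \<subseteq> (\<lambda>mon. mon - Poly_Mapping.single (F m) 1) ` Poly_Mapping.keys X"
  proof
    fix mon assume "mon \<in> {mon. ?f mon \<noteq> 0}"
    then have "mon + Poly_Mapping.single (F m) 1 \<in> Poly_Mapping.keys X"
      by (auto simp: in_keys_iff split: if_splits)
    then show "mon \<in> (\<lambda>mon. mon - Poly_Mapping.single (F m) 1) ` Poly_Mapping.keys X"
      by (rule rev_image_eqI) simp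
  qed
  then have "finite {mon. ?f mon \<noteq> 0}"
    by (rule finite_subset) simp
  then show ?thesis
    unfolding fcoeff_def by simp
qed

lemma restrict_vars_fcoeff:
  "F m \<in> V \<Longrightarrow> restrict_vars V (fcoeff m X) = fcoeff m (restrict_vars V X)"
  by (rule poly_mapping_eqI) (simp add: lookup_fcoeff lookup_restrict_vars keys_add_nat)

lemma fcoeff_eq_0: "m \<notin> Fords X \<Longrightarrow> fcoeff m X = 0"
proof (rule poly_mapping_eqI)
  fix mon :: "var \<Rightarrow>\<^sub>0 nat"
  assume "m \<notin> Fords X"
  moreover have "F m \<in> Poly_Mapping.keys (mon + Poly_Mapping.single (F m) 1)"
    by (simp add: keys_add_nat)
  ultimately have "mon + Poly_Mapping.single (F m) 1 \<notin> Poly_Mapping.keys X"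
    by (auto simp: Fords_def)
  then show "Poly_Mapping.lookup (fcoeff m X) mon = Poly_Mapping.lookup 0 mon"
    by (simp add: lookup_fcoeff in_keys_iff)
qed

lemma finite_Fords: "finite (Fords X)"
proof -
  have "Fords X = (\<Union>mon\<in>Poly_Mapping.keys X. F -` Poly_Mapping.keys mon)"
    by (auto simp: Fords_def)
  moreover have "finite (F -` Poly_Mapping.keys mon)" for mon
    by (rule finite_vimageI) (auto simp: inj_def)
  ultimately show ?thesis by auto
qed

lemma Fords_restrict_vars: "Fords (restrict_vars V X) \<subseteq> Fords X"
  by (auto simp: Fords_def keys_restrict_vars)

lemma Hsym_restrict_vars:
  assumes stable: "\<And>v. dvar v \<in> V \<longleftrightarrow> v \<in> V" and F: "range F \<subseteq> V" and L: "is_symbol L"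
  shows "map_poly (restrict_vars V) (Hsym L i j) = Hsym (restrict_vars V \<circ> L) i j"
proof -
  interpret dpoly_diff_hom "restrict_vars V"
    using stable by (rule dpoly_diff_hom_restrict_vars)
  define X where "X = Hop L i j (Var (F 0))"
  have "restrict_vars V (Var (F 0)) = Var (F 0)"
    using F by (auto simp: Var_def restrict_vars_single)
  then have X': "Hop (restrict_vars V \<circ> L) i j (Var (F 0)) = restrict_vars V X"
    by (simp add: X_def hom_Hop[OF L])
  have "map_poly (restrict_vars V) (Hsym L i j)
        = (\<Sum>m\<in>Fords X. monom (fcoeff m (restrict_vars V X)) m)"
    using F by (simp add: Hsym_def Let_def X_def map_poly_hom_sum map_poly_monom restrict_vars_fcoeff
        range_subsetD)
  also have "\<dots> = (\<Sum>m\<in>Fords (restrict_vars V X). monom (fcoeff m (restrict_vars V X)) m)"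
    by (rule sum.mono_neutral_right) (auto simp: finite_Fords Fords_restrict_vars fcoeff_eq_0)
  also have "\<dots> = Hsym (restrict_vars V \<circ> L) i j"
    by (simp add: Hsym_def Let_def X')
  finally show ?thesis .
qed

definition agree_from :: "int \<Rightarrow> (int \<Rightarrow> 'a) \<Rightarrow> (int \<Rightarrow> 'a) \<Rightarrow> bool" where
  "agree_from \<alpha> A B \<longleftrightarrow> (\<forall>k\<ge>\<alpha>. A k = B k)"

lemma agree_from_diff:
  "agree_from \<alpha> A A' \<Longrightarrow> agree_from \<alpha> B B' \<Longrightarrow> agree_from \<alpha> (A - B) (A' - B')"
  by (simp add: agree_from_def)

lemma splus_eq_if_agree_from: "\<alpha> \<le> 0 \<Longrightarrow> agree_from \<alpha> A B \<Longrightarrow> splus A = splus B"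
  by (auto simp: agree_from_def splus_def)

lemma vanishes_above_common_bound:
  assumes "is_symbol A" and "is_symbol A'"
  obtains N where "vanishes_above N A" and "vanishes_above N A'"
  using assms unfolding is_symbol_iff_vanishes_above
  by (metis vanishes_above_mono max.cobounded1 max.cobounded2)

lemma smul_agree_from_left:
  fixes d :: "'a::comm_ring_1 \<Rightarrow> 'a"
  assumes "is_symbol A" and "is_symbol A'" and B: "vanishes_above NB B" and d: "d 0 = 0"
    and agree: "agree_from \<alpha> A A'"
  shows "agree_from (\<alpha> + NB) (smul d A B) (smul d A' B)"
proof -
  obtain NA where A: "vanishes_above NA A" and A': "vanishes_above NA A'"
    using assms vanishes_above_common_bound by blast
  show ?thesis
    using agree
    by (auto simp: agree_from_def smul_eq_smul_within[where d = d, OF A B d]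
        smul_eq_smul_within[where d = d, OF A' B d] smul_within_def intro!: sum.cong)
qed

lemma smul_agree_from_right:
  fixes d :: "'a::comm_ring_1 \<Rightarrow> 'a"
  assumes A: "vanishes_above NA A" and "is_symbol B" and "is_symbol B'" and d: "d 0 = 0"
    and agree: "agree_from \<beta> B B'"
  shows "agree_from (\<beta> + NA) (smul d A B) (smul d A B')"
proof -
  obtain NB where B: "vanishes_above NB B" and B': "vanishes_above NB B'"
    using assms vanishes_above_common_bound by blast
  show ?thesis
    using agree
    by (auto simp: agree_from_def smul_eq_smul_within[where d = d, OF A B d]
        smul_eq_smul_within[where d = d, OF A B' d] smul_within_def intro!: sum.cong)
qed

lemma Hop_eq_if_agree_from_0:
  assumes L: "vanishes_above N L" and L': "vanishes_above N L'" and agree: "agree_from 0 L L'"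
    and i: "i \<le> 0" and ij: "N + i + j \<le> -1"
  shows "Hop L i j f = Hop L' i j f"
proof -
  have d: "dd 0 = 0" by simp
  note left = smul_agree_from_left[where d = dd] and right = smul_agree_from_right[where d = dd]
    and vanishes_smul = vanishes_above_smul[where d = dd]
  have symbols: "is_symbol L" "is_symbol L'"
    using L L' unfolding is_symbol_iff_vanishes_above by blast+
  define P where "P l = splus (smul dd (smul dd l (spow i)) (sconst f))" for l
  define Q where "Q l = splus (smul dd (smul dd (spow i) (sconst f)) l)" for l
  define D where "D l = smul dd (P l) l - smul dd l (Q l)" for l
  have "agree_from i (smul dd L (spow i)) (smul dd L' (spow i))"
    using left[OF symbols vanishes_above_spow d agree] by simp
  then have "agree_from i (smul dd (smul dd L (spow i)) (sconst f)) (smul dd (smul dd L' (spow i)) (sconst f))"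
    using left[OF _ _ vanishes_above_sconst d] symbols by fastforce
  then have P: "P L = P L'"
    unfolding P_def using i by (rule splus_eq_if_agree_from[rotated])
  have "agree_from i (smul dd (smul dd (spow i) (sconst f)) L) (smul dd (smul dd (spow i) (sconst f)) L')"
    using right[OF vanishes_smul[OF vanishes_above_spow vanishes_above_sconst d]
        symbols d agree] by simp
  then have Q: "Q L = Q L'"
    unfolding Q_def using i by (rule splus_eq_if_agree_from[rotated])
  have "vanishes_above (N + i) (P L')"
    unfolding P_def using vanishes_above_splus[OF vanishes_smul[OF
        vanishes_smul[OF L' vanishes_above_spow d] vanishes_above_sconst d]] by simp
  moreover have "vanishes_above (N + i) (Q L')"
    unfolding Q_def add.commute[of N]
    using vanishes_above_splus[OF vanishes_smul[OF
        vanishes_smul[OF vanishes_above_spow vanishes_above_sconst d] L' d]] by simp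
  ultimately have "agree_from (N + i) (D L) (D L')"
    unfolding D_def P Q
    using right[OF _ symbols d agree] left[OF symbols _ d agree]
    by (fastforce intro: agree_from_diff)
  then have "agree_from (N + i + j) (smul dd (D L) (spow j)) (smul dd (D L') (spow j))"
    using left[OF _ _ vanishes_above_spow d] symbols
    by (simp add: D_def P_def Q_def)
  then show ?thesis
    using ij by (simp add: Hop_def sres_def agree_from_def D_def P_def Q_def)
qed

lemma Hsym_eq_if_agree_from_0:
  assumes "vanishes_above N L" and "vanishes_above N L'" and "agree_from 0 L L'"
    and "i \<le> 0" and "N + i + j \<le> -1"
  shows "Hsym L i j = Hsym L' i j"
  using Hop_eq_if_agree_from_0[OF assms] by (simp add: Hsym_def)

section \<open>Brackets are determined by their values on generators\<close>

lemma is_PVA_right_add: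
  "is_PVA S br \<Longrightarrow> a \<in> S \<Longrightarrow> b \<in> S \<Longrightarrow> c \<in> S \<Longrightarrow> br a (b + c) = br a b + br a c"
  unfolding is_PVA_def by meson

lemma is_PVA_right_cst:
  "is_PVA S br \<Longrightarrow> a \<in> S \<Longrightarrow> b \<in> S \<Longrightarrow> br a (cst z * b) = smult (cst z) (br a b)"
  unfolding is_PVA_def by meson

lemma is_PVA_right_dd: "is_PVA S br \<Longrightarrow> a \<in> S \<Longrightarrow> b \<in> S \<Longrightarrow> br a (dd b) = lpd (br a b)"
  unfolding is_PVA_def by meson

lemma is_PVA_right_mult:
  "is_PVA S br \<Longrightarrow> a \<in> S \<Longrightarrow> b \<in> S \<Longrightarrow> c \<in> S \<Longrightarrow>
     br a (b * c) = smult c (br a b) + smult b (br a c)"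
  unfolding is_PVA_def by meson

lemma is_PVA_skew: "is_PVA S br \<Longrightarrow> a \<in> S \<Longrightarrow> b \<in> S \<Longrightarrow> br b a = - skew_sub (br a b)"
  unfolding is_PVA_def by meson

lemma is_PVA_right_one: "is_PVA S br \<Longrightarrow> a \<in> S \<Longrightarrow> 1 \<in> S \<Longrightarrow> br a 1 = 0"
  using is_PVA_right_mult[of S br a 1 1] by simp

context dpoly_diff_hom
begin

lemma bracket_hom_right_derivatives:
  assumes br: "is_PVA WT br" and br': "is_PVA S br'" and image: "\<phi> ` WT \<subseteq> S" and a: "a \<in> WT"
    and generator: "map_poly \<phi> (br a (Var (U i 0))) = br' (\<phi> a) (\<phi> (Var (U i 0)))"
  shows "map_poly \<phi> (br a (Var (U i m))) = br' (\<phi> a) (\<phi> (Var (U i m)))"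
proof (induction m)
  case (Suc m)
  have Var_Suc: "Var (U i (Suc m)) = dd (Var (U i m))"
    by (simp add: dd_Var)
  have "map_poly \<phi> (br a (Var (U i (Suc m)))) = lpd (map_poly \<phi> (br a (Var (U i m))))"
    by (simp add: Var_Suc is_PVA_right_dd[OF br a WT_Var] map_poly_hom_lpd)
  also have "\<dots> = br' (\<phi> a) (dd (\<phi> (Var (U i m))))"
    using image a WT_Var by (simp add: Suc is_PVA_right_dd[OF br'] image_subset_iff)
  finally show ?case
    by (simp add: Var_Suc hom_dd)
qed (rule generator)

lemma bracket_hom_right:
  assumes br: "is_PVA WT br" and br': "is_PVA S br'" and image: "\<phi> ` WT \<subseteq> S" and a: "a \<in> WT"
    and generators: "\<And>i. map_poly \<phi> (br a (Var (U i 0))) = br' (\<phi> a) (\<phi> (Var (U i 0)))"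
    and b: "b \<in> WT"
  shows "map_poly \<phi> (br a b) = br' (\<phi> a) (\<phi> b)"
proof -
  have in_S: "\<phi> x \<in> S" if "x \<in> WT" for x
    using image that by blast
  have "b \<in> polys_in {U i m | i m. True}"
    using b by (simp add: WT_def)
  then show ?thesis
  proof (induction rule: polys_in_induct)
    case one
    have "1 \<in> WT" by (simp add: WT_def polys_in_def)
    moreover from in_S[OF this] have "1 \<in> S" by (simp add: hom_one)
    ultimately show ?case
      using is_PVA_right_one[OF br a] is_PVA_right_one[OF br' in_S[OF a]] by (simp add: hom_one)
  next
    case (Var v)
    then show ?case
      using bracket_hom_right_derivatives[OF br br' image a generators] by auto
  next
    case (cst z q)
    then have "q \<in> WT" by (simp add: WT_def)
    with cst.IH show ?case
      by (simp add: is_PVA_right_cst[OF br a] is_PVA_right_cst[OF br' in_S[OF a] in_S]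
          map_poly_hom_smult hom_mult hom_cst)
  next
    case (add x y)
    then have "x \<in> WT" "y \<in> WT" by (simp_all add: WT_def)
    with add.IH show ?case
      by (simp add: is_PVA_right_add[OF br a] is_PVA_right_add[OF br' in_S[OF a] in_S in_S]
          map_poly_hom_add hom_add)
  next
    case (mult x y)
    then have "x \<in> WT" "y \<in> WT" by (simp_all add: WT_def)
    with mult.IH show ?case
      by (simp add: is_PVA_right_mult[OF br a] is_PVA_right_mult[OF br' in_S[OF a] in_S in_S]
          map_poly_hom_add map_poly_hom_smult hom_mult)
  qed
qed

lemma bracket_hom_if_generators:
  assumes br: "is_PVA WT br" and br': "is_PVA S br'" and image: "\<phi> ` WT \<subseteq> S"
    and generators: "\<And>i j. map_poly \<phi> (br (Var (U i 0)) (Var (U j 0)))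
                            = br' (\<phi> (Var (U i 0))) (\<phi> (Var (U j 0)))"
    and a: "a \<in> WT" and b: "b \<in> WT"
  shows "map_poly \<phi> (br a b) = br' (\<phi> a) (\<phi> b)"
proof -
  have in_S: "\<phi> x \<in> S" if "x \<in> WT" for x
    using image that by blast
  have left_generator: "map_poly \<phi> (br (Var (U i 0)) c) = br' (\<phi> (Var (U i 0))) (\<phi> c)"
    if "c \<in> WT" for i c
    using bracket_hom_right[OF br br' image WT_Var generators that] .
  \<comment> \<open>skew-symmetry moves the generator into the right argument\<close>
  have "map_poly \<phi> (br c (Var (U i 0))) = br' (\<phi> c) (\<phi> (Var (U i 0)))" if "c \<in> WT" for i c
    using is_PVA_skew[OF br WT_Var that] is_PVA_skew[OF br' in_S[OF WT_Var] in_S[OF that]]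
    by (simp add: map_poly_hom_uminus map_poly_hom_skew_sub left_generator[OF that])
  then show ?thesis
    using bracket_hom_right[OF br br' image a _ b] a by blast
qed

end

section \<open>The projection \<open>Pr\<^sup>P\<^sup>V\<^sub>n\<close>\<close>

lemma PrPV_eq_restrict_vars: "PrPV n = restrict_vars (- {U i k | i k. n \<le> i})"
  unfolding PrPV_def restrict_vars_def
  by (intro ext arg_cong[where f = Abs_poly_mapping] if_cong) auto

lemma dvar_in_low_vars_iff:
  "dvar v \<in> - {U i k | i k. n \<le> i} \<longleftrightarrow> v \<in> - {U i k | i k. n \<le> i}"
  by (cases v) auto

interpretation Pr: dpoly_diff_hom "PrPV n" for n
  unfolding PrPV_eq_restrict_vars
  by (rule dpoly_diff_hom_restrict_vars) (rule dvar_in_low_vars_iff)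

lemma PrPV_image_WT: "PrPV n ` WT = WA n"
proof -
  have "{U i m | i m. True} \<inter> - {U i k | i k. n \<le> i} = {U i m | i m. i < n}"
    by auto
  then show ?thesis
    by (simp add: PrPV_eq_restrict_vars WT_def WA_def restrict_vars_image_polys_in)
qed

lemma PrPV_Hsym:
  "is_symbol L \<Longrightarrow> map_poly (PrPV n) (Hsym L i j) = Hsym (PrPV n \<circ> L) i j"
  unfolding PrPV_eq_restrict_vars by (rule Hsym_restrict_vars[OF dvar_in_low_vars_iff]) auto

lemma PrPV_wT: "PrPV n (wT k) = wA n k"
  by (simp add: PrPV_eq_restrict_vars restrict_vars_single wT_def wA_def Var_def)

lemma PrPV_monic_sym: "PrPV n \<circ> monic_sym n wT = monic_sym n (wA n)"
  by (rule ext) (simp add: monic_sym_def PrPV_wT Pr.hom_one)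

lemma PrPV_bracket_generators:
  assumes "adler_type bT n wT" and "adler_type bA n (wA n)"
  shows "map_poly (PrPV n) (bT (wT i) (wT j)) = bA (PrPV n (wT i)) (PrPV n (wT j))"
  using assms unfolding adler_type_def
  by (simp add: PrPV_Hsym PrPV_monic_sym PrPV_wT)

lemma PrPV_bracket:
  assumes "is_PVA WT bT" and "adler_type bT n wT"
    and "is_PVA (WA n) bA" and "adler_type bA n (wA n)"
    and "a \<in> WT" and "b \<in> WT"
  shows "map_poly (PrPV n) (bT a b) = bA (PrPV n a) (PrPV n b)"
proof (rule Pr.bracket_hom_if_generators[OF assms(1,3) _ _ assms(5,6)])
  show "PrPV n ` WT \<subseteq> WA n"
    by (simp add: PrPV_image_WT)
  show "map_poly (PrPV n) (bT (Var (U i 0)) (Var (U j 0)))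
        = bA (PrPV n (Var (U i 0))) (PrPV n (Var (U j 0)))" for i j
    using PrPV_bracket_generators[OF assms(2,4), of i j] by (simp only: wT_def)
qed

lemma agree_from_0_monic_sym: "agree_from 0 (monic_sym n wT) (monic_sym n (wA n))"
  by (auto simp: agree_from_def monic_sym_def wT_def wA_def)

lemma bracket_generators_eq_for_large_n:
  assumes "adler_type bT n wT" and "adler_type bA n (wA n)" and "i + j < n"
  shows "bA (Var (U i 0)) (Var (U j 0)) = bT (Var (U i 0)) (Var (U j 0))"
proof -
  have "wA n i = Var (U i 0)" and "wA n j = Var (U j 0)"
    using assms(3) by (simp_all add: wA_def)
  then have "bA (Var (U i 0)) (Var (U j 0)) = Hsym (monic_sym n (wA n)) (int j - int n) (int i - int n)"
    using assms(2) unfolding adler_type_def by metis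
  also have "\<dots> = Hsym (monic_sym n wT) (int j - int n) (int i - int n)"
    using assms(3) Hsym_eq_if_agree_from_0[OF vanishes_above_monic_sym vanishes_above_monic_sym
        agree_from_0_monic_sym[of n]]
    by simp
  also have "\<dots> = bT (Var (U i 0)) (Var (U j 0))"
    using assms(1) unfolding adler_type_def by (simp add: wT_def)
  finally show ?thesis .
qed

theorem mainTheorem18:
  fixes brT brA :: "nat \<Rightarrow> dpoly \<Rightarrow> dpoly \<Rightarrow> dpoly poly"
  assumes T: "\<And>n. n > 0 \<Longrightarrow> is_PVA WT (brT n) \<and> adler_type (brT n) n wT"
      and A: "\<And>n. n > 0 \<Longrightarrow> is_PVA (WA n) (brA n) \<and> adler_type (brA n) n (wA n)"
  shows "(\<forall>n>0.
            PrPV n ` WT = WA n \<and>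
            PrPV n 1 = 1 \<and>
            (\<forall>a\<in>WT. \<forall>b\<in>WT. PrPV n (a + b) = PrPV n a + PrPV n b \<and>
                             PrPV n (a * b) = PrPV n a * PrPV n b) \<and>
            (\<forall>z. PrPV n (cst z) = cst z) \<and>
            (\<forall>a\<in>WT. PrPV n (dd a) = dd (PrPV n a)) \<and>
            (\<forall>a\<in>WT. \<forall>b\<in>WT. map_poly (PrPV n) (brT n a b) = brA n (PrPV n a) (PrPV n b)))
       \<and> (\<forall>i0 j0. \<exists>N. \<forall>n\<ge>N.
            map_poly (InvPV n) (brA n (Var (U i0 0)) (Var (U j0 0)))
              = brT n (Var (U i0 0)) (Var (U j0 0)))"
proof (intro conjI allI impI ballI)
  show "map_poly (PrPV n) (brT n a b) = brA n (PrPV n a) (PrPV n b)"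
    if "n > 0" and "a \<in> WT" and "b \<in> WT" for n a b
    using T[OF \<open>n > 0\<close>] A[OF \<open>n > 0\<close>] that(2,3) by (blast intro: PrPV_bracket)
  show "\<exists>N. \<forall>n\<ge>N. map_poly (InvPV n) (brA n (Var (U i0 0)) (Var (U j0 0)))
                    = brT n (Var (U i0 0)) (Var (U j0 0))" for i0 j0
  proof (intro exI allI impI)
    fix n assume n: "i0 + j0 + 1 \<le> n"
    have "InvPV n = (\<lambda>p. p)"
      by (simp add: fun_eq_iff InvPV_def)
    moreover have "brA n (Var (U i0 0)) (Var (U j0 0)) = brT n (Var (U i0 0)) (Var (U j0 0))"
      using n T[of n] A[of n] bracket_generators_eq_for_large_n[of "brT n" n "brA n" i0 j0] by simp
    ultimately show "map_poly (InvPV n) (brA n (Var (U i0 0)) (Var (U j0 0)))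
               = brT n (Var (U i0 0)) (Var (U j0 0))"
      by simp
  qed
qed (simp_all add: PrPV_image_WT Pr.hom_one Pr.hom_add Pr.hom_mult Pr.hom_cst Pr.hom_dd)

end
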